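(* Let $b>0$, $p_0>0$, and let $(p_\ell)_{\ell\ge1}$ be a probability distribution on $\{1,2,\dots\}$ with $p_\ell\ell^2\to p_0$ as $\ell\to\infty$. Let $k,j\in\mathbb N$ with $k\ge j\ge2$ and let $c_0>0$. For $K>1$ and $n\ge c_0/2$ define \[R_j(K,n)=K\log(K)\,nb\sum_{\ell\ge j-1}p_\ell\,\frac{\binom{K\log(K)n+\ell-k}{\ell+1-j}}{\binom{K\log(K)n+\ell}{\ell+1}},\qquad R_j=\int_0^1u^j(1-u)^{k-j}\frac{bp_0}{u^2}\,du.\] Then $R_j(K,n)\to R_j$ as $K\to\infty$, uniformly in $n\ge c_0/2$.
   Context: Binomial coefficients with non-integer upper argument are understood in the generalized sense $\binom{x}{r}=\frac{x(x-1)\cdots(x-r+1)}{r!}$ (equivalently via Gamma functions), for real $x$ and nonnegative integer $r$. *)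

theory Defs
  imports "HOL-Analysis.Analysis"
begin

definition Rjn :: "(nat \<Rightarrow> real) \<Rightarrow> real \<Rightarrow> nat \<Rightarrow> nat \<Rightarrow> real \<Rightarrow> real \<Rightarrow> real" where
  "Rjn p b k j K n =
     K * ln K * n * b *
     (\<Sum>i. (let l = i + (j - 1) in
        p l * (((K * ln K * n + real l - real k) gchoose (l + 1 - j))
               / ((K * ln K * n + real l) gchoose (l + 1)))))"

definition Rj :: "real \<Rightarrow> real \<Rightarrow> nat \<Rightarrow> nat \<Rightarrow> real" where
  "Rj b p0 k j = integral {0..1} (\<lambda>u. u ^ j * (1 - u) ^ (k - j) * (b * p0 / u\<^sup>2))"

end

theory Submission
  imports Defs "HOL-Real_Asymp.Real_Asymp"
begin

(* Write j = a + 2 and k = a + d + 2. With N = K log(K) n, the summand of N * R_j(K,n) / b at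
   l = i + a + 1 factors as Q_i * w_N(i), where Q_i = p_l l (l + 1) tends to p0 and
   w_N(i) = (N)_(d+1) (i+a)_a / (N+1+i+a)_(a+d+2) in falling factorials.
   A telescoping induction on a shows that the weights w_N sum to a! d! / (a+d+1)!, the Beta
   integral B(a+1, d+1), for every large N, while each single weight tends to 0. Hence they form
   a Toeplitz summation method, and N * R_j(K,n) / b tends to p0 B(a+1, d+1) = R_j / b.
   Uniformity in n >= c0/2 is automatic, as K and n enter only through N >= K log(K) c0/2. *)

(* Falling factorial; the library's pochhammer is the rising one. *)
definition ffact :: "'a::comm_ring_1 \<Rightarrow> nat \<Rightarrow> 'a" where
  "ffact x n = (\<Prod>i<n. x - of_nat i)"

lemma ffact_0 [simp]: "ffact x 0 = 1"
  by (simp add: ffact_def)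

lemma ffact_Suc: "ffact x (Suc n) = ffact x n * (x - of_nat n)"
  by (simp add: ffact_def)

lemma ffact_Suc_left: "ffact x (Suc n) = x * ffact (x - 1) n"
  unfolding ffact_def prod.lessThan_Suc_shift by (simp add: algebra_simps)

lemma ffact_add: "ffact x (m + n) = ffact x m * ffact (x - of_nat m) n"
  by (induction n) (auto simp: ffact_Suc algebra_simps)

lemma ffact_of_nat_self: "ffact (of_nat n) n = fact n"
  by (induction n) (auto simp: ffact_Suc_left)

lemma ffact_of_nat_eq_0: "m < n \<Longrightarrow> ffact (of_nat m) n = 0"
  unfolding ffact_def by (rule prod_zero) auto

lemma gbinomial_ffact: "a gchoose n = ffact a n / fact n"
  by (simp add: gbinomial_prod_rev ffact_def atLeast0LessThan)

lemma of_nat_le_minus_1: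
  "i < n \<Longrightarrow> (of_nat i :: 'a::linordered_idom) \<le> of_nat n - 1"
  using of_nat_le_iff[of "Suc i" n, where ?'a='a] by simp

lemma ffact_pos:
  fixes x :: "'a::linordered_idom"
  assumes "x > of_nat n - 1"
  shows "ffact x n > 0"
  unfolding ffact_def using assms of_nat_le_minus_1[where ?'a='a, of _ n]
  by (intro prod_pos) force

lemma ffact_of_nat_nonneg: "ffact (of_nat m :: 'a::linordered_idom) n \<ge> 0"
proof (cases "m < n")
  case True
  then show ?thesis by (simp add: ffact_of_nat_eq_0)
next
  case False
  then show ?thesis unfolding ffact_def by (intro prod_nonneg) auto
qed

lemma ffact_mono:
  fixes x y :: "'a::linordered_idom"
  assumes "x > of_nat n - 1" "x \<le> y"
  shows "ffact x n \<le> ffact y n"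
  unfolding ffact_def using assms of_nat_le_minus_1[where ?'a='a, of _ n]
  by (intro prod_mono) force

lemma ffact_ge:
  fixes x :: "'a::linordered_idom"
  assumes "n \<ge> 1" "x \<ge> of_nat n"
  shows "ffact x n \<ge> x - of_nat n + 1"
proof -
  obtain m where n: "n = Suc m" using assms(1) by (cases n) auto
  have "ffact x m \<ge> 1"
    unfolding ffact_def using assms n of_nat_le_minus_1[where ?'a='a, of _ m]
    by (intro prod_ge_1) force
  moreover have "x - of_nat m \<ge> 0" using assms n by simp
  ultimately have "ffact x m * (x - of_nat m) \<ge> x - of_nat m"
    using mult_right_mono by fastforce
  then show ?thesis using n by (simp add: ffact_Suc)
qed

lemma filterlim_ffact_at_top:
  assumes "n \<ge> 1"
  shows "filterlim (\<lambda>x::real. ffact x n) at_top at_top"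
proof (rule filterlim_at_top_mono)
  show "filterlim (\<lambda>x::real. x - real n + 1) at_top at_top" by real_asymp
  show "\<forall>\<^sub>F x in at_top. x - real n + 1 \<le> ffact x n"
    using eventually_ge_at_top[of "real n"] by eventually_elim (use assms ffact_ge in auto)
qed

lemma sums_inverse_ffact:
  fixes x :: real
  assumes "x > real (d + 1)"
  shows "(\<lambda>m. 1 / ffact (x + real m) (d + 2)) sums (1 / (real (d + 1) * ffact (x - 1) (d + 1)))"
proof -
  define f where "f m = 1 / real (d + 1) / ffact (x + real m - 1) (d + 1)" for m
  have "f m - f (Suc m) = 1 / ffact (x + real m) (d + 2)" for m
  proof -
    define y where "y = x + real m"
    define P where "P = ffact y (d + 2)"
    have y: "y > real (d + 1)" using assms by (simp add: y_def)
    have "P = y * ffact (y - 1) (d + 1)" "P = ffact y (d + 1) * (y - real (d + 1))"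
      using ffact_Suc_left[of y "d + 1"] ffact_Suc[of y "d + 1"] by (simp_all add: P_def)
    then have "ffact (y - 1) (d + 1) = P / y" "ffact y (d + 1) = P / (y - real (d + 1))"
      using y by (auto simp: field_simps)
    moreover have "f m = 1 / real (d + 1) / ffact (y - 1) (d + 1)"
      "f (Suc m) = 1 / real (d + 1) / ffact y (d + 1)"
      by (simp_all add: f_def y_def algebra_simps)
    ultimately have "f m - f (Suc m) = (y - (y - real (d + 1))) / (real (d + 1) * P)"
      by (simp add: diff_divide_distrib)
    then show ?thesis by (simp add: P_def y_def)
  qed
  moreover have "f \<longlonglongrightarrow> 0"
    unfolding f_def
  proof (intro tendsto_divide_0 filterlim_at_top_imp_at_infinity)
    have "filterlim (\<lambda>m. x + real m - 1) at_top sequentially" by real_asymp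
    then show "filterlim (\<lambda>m. ffact (x + real m - 1) (d + 1)) at_top sequentially"
      by (rule filterlim_compose[OF filterlim_ffact_at_top, rotated]) simp
  qed (rule tendsto_const)
  ultimately have "(\<lambda>m. 1 / ffact (x + real m) (d + 2)) sums (f 0 - 0)"
    using telescope_sums'[of f 0] by simp
  then show ?thesis by (simp add: f_def)
qed

lemma fact_Beta_recurrence:
  "(fact a * fact d / fact (a + d + 1) :: real) - fact a * fact (d + 1) / fact (a + d + 2)
     = fact (Suc a) * fact d / fact (Suc a + d + 1)"
proof -
  define c where "c = (fact a * fact d / fact (a + d + 1) :: real)"
  have "fact a * fact (d + 1) / fact (a + d + 2) = c * ((real d + 1) / (real a + real d + 2))"
    "fact (Suc a) * fact d / fact (Suc a + d + 1) = c * ((real a + 1) / (real a + real d + 2))"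
    by (simp_all add: c_def ac_simps)
  moreover have "c - c * ((real d + 1) / (real a + real d + 2))
      = c * ((real a + 1) / (real a + real d + 2))"
    by (simp add: field_simps)
  ultimately show ?thesis by (simp add: c_def)
qed

lemma sums_ffact_ratio:
  fixes x :: real
  assumes "x > real (a + d + 1)"
  shows "(\<lambda>m. ffact (real m) a / ffact (x + real m) (a + d + 2)) sums
           (fact a * fact d / (fact (a + d + 1) * ffact (x - 1) (d + 1)))"
  using assms
proof (induction a arbitrary: d x)
  case 0
  have "fact d / (fact (d + 1) * F) = 1 / (real (d + 1) * F)" for F :: real
    by (simp add: mult.commute[of _ "fact d"] mult.assoc)
  with 0 show ?case using sums_inverse_ffact[of d x] by simp
next
  case (Suc a)
  define g where "g m = ffact (real m) (Suc a) / ffact (x + real m) (Suc a + d + 2)" for m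
  \<comment> \<open>Writing (m+1)/(x+m+1) = 1 - x/(x+m+1) reduces the series to two instances of the
     induction hypothesis, one for (d, x) and one for (d + 1, x + 1).\<close>
  have g_Suc: "g (Suc m) = ffact (real m) a / ffact (x + real m) (a + d + 2)
      - x * (ffact (real m) a / ffact (x + 1 + real m) (a + (d + 1) + 2))" for m
  proof -
    define F where "F = ffact (x + real m) (a + d + 2)"
    define z where "z = x + real m + 1"
    have "ffact (real (Suc m)) (Suc a) = (z - x) * ffact (real m) a"
      "ffact (x + real (Suc m)) (Suc a + d + 2) = z * F"
      "ffact (x + 1 + real m) (a + (d + 1) + 2) = z * F"
      using ffact_Suc_left[of z "a + d + 2"]
      by (simp_all add: ffact_Suc_left F_def z_def algebra_simps)
    moreover have "F > 0" "z > 0"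
      using Suc.prems by (auto simp: F_def z_def intro!: ffact_pos)
    ultimately show ?thesis
      unfolding g_def F_def[symmetric] by (simp add: field_simps)
  qed
  have "(\<lambda>m. g (Suc m)) sums
      (fact a * fact d / (fact (a + d + 1) * ffact (x - 1) (d + 1))
       - x * (fact a * fact (d + 1) / (fact (a + d + 2) * ffact x (d + 2))))"
    unfolding g_Suc using Suc.IH[of d x] Suc.IH[of "d + 1" "x + 1"] Suc.prems
    by (intro sums_diff sums_mult) (simp_all add: algebra_simps)
  moreover have "g 0 = 0" by (simp add: g_def ffact_Suc_left)
  moreover have "fact a * fact d / (fact (a + d + 1) * ffact (x - 1) (d + 1))
       - x * (fact a * fact (d + 1) / (fact (a + d + 2) * ffact x (d + 2)))
     = fact (Suc a) * fact d / (fact (Suc a + d + 1) * ffact (x - 1) (d + 1))"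
  proof -
    define F where "F = ffact (x - 1) (d + 1)"
    have "ffact x (d + 2) = x * F"
      using ffact_Suc_left[of x "d + 1"] by (simp add: F_def)
    moreover have "x > 0" using Suc.prems by simp
    ultimately have "fact a * fact d / (fact (a + d + 1) * F)
        - x * (fact a * fact (d + 1) / (fact (a + d + 2) * ffact x (d + 2)))
        = (fact a * fact d / fact (a + d + 1) - fact a * fact (d + 1) / fact (a + d + 2)) / F"
      by (simp only: diff_divide_distrib divide_divide_eq_left) (simp add: ac_simps)
    also have "\<dots> = fact (Suc a) * fact d / (fact (Suc a + d + 1) * F)"
      by (simp only: fact_Beta_recurrence divide_divide_eq_left)
    finally show ?thesis by (simp only: F_def)
  qed
  ultimately have "g sums (fact (Suc a) * fact d / (fact (Suc a + d + 1) * ffact (x - 1) (d + 1)))"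
    using sums_Suc_iff[of g] by simp
  then show ?case by (simp only: g_def[abs_def])
qed

lemma abs_suminf_mult_weights_le:
  fixes u W :: "nat \<Rightarrow> real"
  assumes W: "W sums C" "\<And>i. W i \<ge> 0"
    and bound: "\<And>i. \<bar>u i\<bar> \<le> B" and tail: "\<And>i. i \<ge> L \<Longrightarrow> \<bar>u i\<bar> \<le> e"
  shows "summable (\<lambda>i. u i * W i)" "\<bar>\<Sum>i. u i * W i\<bar> \<le> B * (\<Sum>i<L. W i) + e * C"
proof -
  define g where "g i = B * (if i < L then W i else 0) + e * W i" for i
  have "(\<lambda>i. if i < L then W i else 0) sums (\<Sum>i<L. W i)"
    using sums_finite[of "{..<L}" "\<lambda>i. if i < L then W i else 0"] by simp
  then have g: "g sums (B * (\<Sum>i<L. W i) + e * C)"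
    unfolding g_def by (intro sums_add sums_mult W(1))
  have "e \<ge> 0" "B \<ge> 0" using tail[of L] bound[of L] by auto
  then have ug: "\<bar>u i * W i\<bar> \<le> g i" for i
  proof (cases "i < L")
    case True
    have "\<bar>u i * W i\<bar> \<le> B * W i"
      using bound[of i] W(2)[of i] by (simp add: abs_mult mult_right_mono)
    moreover have "e * W i \<ge> 0" using \<open>e \<ge> 0\<close> W(2)[of i] by simp
    ultimately show ?thesis using True by (simp add: g_def)
  next
    case False
    have "\<bar>u i * W i\<bar> \<le> e * W i"
      using tail[of i] False W(2)[of i] by (simp add: abs_mult mult_right_mono)
    then show ?thesis using False by (simp add: g_def)
  qed
  have abs_sum: "summable (\<lambda>i. \<bar>u i * W i\<bar>)"
    using ug by (intro summable_comparison_test'[OF sums_summable[OF g]]) simp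
  then show "summable (\<lambda>i. u i * W i)" by (rule summable_rabs_cancel)
  have "\<bar>\<Sum>i. u i * W i\<bar> \<le> (\<Sum>i. \<bar>u i * W i\<bar>)"
    using abs_sum by (rule summable_rabs)
  also have "\<dots> \<le> (\<Sum>i. g i)"
    using ug abs_sum sums_summable[OF g] by (intro suminf_le) auto
  finally show "\<bar>\<Sum>i. u i * W i\<bar> \<le> B * (\<Sum>i<L. W i) + e * C"
    using g by (simp add: sums_iff)
qed

lemma tendsto_suminf_mult_weights:
  fixes W :: "'b \<Rightarrow> nat \<Rightarrow> real" and Q :: "nat \<Rightarrow> real"
  assumes W: "\<forall>\<^sub>F N in F. W N sums C \<and> (\<forall>i. W N i \<ge> 0)"
    and W_0: "\<And>i. ((\<lambda>N. W N i) \<longlongrightarrow> 0) F"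
    and Q: "Q \<longlonglongrightarrow> q"
  shows "((\<lambda>N. \<Sum>i. Q i * W N i) \<longlongrightarrow> q * C) F"
proof (rule tendstoI)
  fix \<epsilon> :: real assume "\<epsilon> > 0"
  have "Bseq (\<lambda>i. Q i - q)"
    using LIM_zero[OF Q] by (intro convergent_imp_Bseq convergentI)
  then obtain B where B: "\<And>i. \<bar>Q i - q\<bar> \<le> B"
    unfolding Bseq_def by auto
  define e where "e = \<epsilon> / (2 * (\<bar>C\<bar> + 1))"
  have "e > 0" using \<open>\<epsilon> > 0\<close> by (simp add: e_def)
  then obtain L where L: "\<And>i. i \<ge> L \<Longrightarrow> \<bar>Q i - q\<bar> \<le> e"
    using tendstoD[OF Q] unfolding eventually_sequentially dist_real_def by (meson less_imp_le)
  have "((\<lambda>N. B * (\<Sum>i<L. W N i)) \<longlongrightarrow> 0) F"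
    using W_0 by (intro tendsto_mult_right_zero tendsto_null_sum)
  then have "\<forall>\<^sub>F N in F. B * (\<Sum>i<L. W N i) < \<epsilon> / 2"
    using \<open>\<epsilon> > 0\<close> by (intro order_tendstoD(2)) auto
  with W show "\<forall>\<^sub>F N in F. dist (\<Sum>i. Q i * W N i) (q * C) < \<epsilon>"
  proof eventually_elim
    case (elim N)
    then have WN: "W N sums C" "\<And>i. W N i \<ge> 0" by auto
    note bound = abs_suminf_mult_weights_le[of "W N" C "\<lambda>i. Q i - q" B L e, OF WN B L]
    have "C \<ge> 0" using WN by (metis sums_iff suminf_nonneg)
    then have "e * C < \<epsilon> / 2"
      using \<open>\<epsilon> > 0\<close> by (simp add: e_def field_simps)
    have "(\<lambda>i. (Q i - q) * W N i + q * W N i) sums ((\<Sum>i. (Q i - q) * W N i) + q * C)"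
      using bound(1) WN(1) by (intro sums_add sums_mult summable_sums)
    then have "(\<Sum>i. Q i * W N i) - q * C = (\<Sum>i. (Q i - q) * W N i)"
      by (simp add: algebra_simps sums_iff)
    then show ?case
      using bound(2) elim \<open>e * C < \<epsilon> / 2\<close> by (simp add: dist_real_def)
  qed
qed

definition beta_weight :: "nat \<Rightarrow> nat \<Rightarrow> real \<Rightarrow> nat \<Rightarrow> real" where
  "beta_weight a d N i =
     ffact N (d + 1) * ffact (real (i + a)) a / ffact (N + 1 + real (i + a)) (a + d + 2)"

lemma beta_weight_nonneg:
  assumes "N > real (a + d)"
  shows "beta_weight a d N i \<ge> 0"
  using assms unfolding beta_weight_def
  by (intro divide_nonneg_nonneg mult_nonneg_nonneg less_imp_le[OF ffact_pos] ffact_of_nat_nonneg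
      [where ?'a=real, unfolded of_nat_add]) auto

lemma beta_weight_sums:
  assumes "N > real (a + d)"
  shows "beta_weight a d N sums (fact a * fact d / fact (a + d + 1))"
proof -
  have "(\<lambda>m. ffact (real m) a / ffact (N + 1 + real m) (a + d + 2)) sums
      (fact a * fact d / (fact (a + d + 1) * ffact N (d + 1)))"
    using sums_ffact_ratio[of a d "N + 1"] assms by simp
  then have "(\<lambda>i. ffact (real (i + a)) a / ffact (N + 1 + real (i + a)) (a + d + 2)) sums
      (fact a * fact d / (fact (a + d + 1) * ffact N (d + 1)))"
    by (subst sums_zero_iff_shift) (auto simp: ffact_of_nat_eq_0[where ?'a=real, simplified])
  then have "(\<lambda>i. ffact N (d + 1) *
      (ffact (real (i + a)) a / ffact (N + 1 + real (i + a)) (a + d + 2)))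
      sums (ffact N (d + 1) * (fact a * fact d / (fact (a + d + 1) * ffact N (d + 1))))"
    by (rule sums_mult)
  moreover have "ffact N (d + 1) > 0" using assms by (intro ffact_pos) auto
  ultimately show ?thesis by (simp add: beta_weight_def[abs_def])
qed

lemma beta_weight_tendsto_0: "((\<lambda>N. beta_weight a d N i) \<longlongrightarrow> 0) at_top"
proof (rule tendsto_sandwich)
  define c where "c = ffact (real (i + a)) a"
  have "c \<ge> 0" unfolding c_def by (rule ffact_of_nat_nonneg[where ?'a=real, unfolded of_nat_add])
  show "\<forall>\<^sub>F N in at_top. 0 \<le> beta_weight a d N i"
    using eventually_gt_at_top by eventually_elim (rule beta_weight_nonneg)
  show "\<forall>\<^sub>F N in at_top. beta_weight a d N i \<le> c / ffact (N + real (i + a) - real d) (a + 1)"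
    using eventually_gt_at_top[of "real (a + d)"]
  proof eventually_elim
    case (elim N)
    define Y where "Y = N + 1 + real (i + a)"
    define G where "G = ffact (N + real (i + a) - real d) (a + 1)"
    have "ffact Y (a + d + 2) = ffact Y (d + 1) * G"
      using ffact_add[of Y "d + 1" "a + 1"] by (simp add: Y_def G_def algebra_simps)
    moreover have "0 < ffact N (d + 1)" "ffact N (d + 1) \<le> ffact Y (d + 1)" "G > 0"
      using elim by (auto simp: Y_def G_def intro!: ffact_pos ffact_mono)
    ultimately have "ffact N (d + 1) / ffact Y (a + d + 2) \<le> 1 / G"
      by (simp add: field_simps)
    then have "c * (ffact N (d + 1) / ffact Y (a + d + 2)) \<le> c * (1 / G)"
      using \<open>c \<ge> 0\<close> by (rule mult_left_mono)
    then show ?case by (simp add: beta_weight_def Y_def G_def c_def mult.commute)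
  qed
  have "filterlim (\<lambda>N. N + real (i + a) - real d) at_top at_top" by real_asymp
  then show "((\<lambda>N. c / ffact (N + real (i + a) - real d) (a + 1)) \<longlongrightarrow> 0) at_top"
    by (intro tendsto_divide_0[OF tendsto_const] filterlim_at_top_imp_at_infinity
        filterlim_compose[OF filterlim_ffact_at_top]) auto
qed simp

definition binom_ratio :: "nat \<Rightarrow> nat \<Rightarrow> real \<Rightarrow> nat \<Rightarrow> real" where
  "binom_ratio a d N i =
     ((N + real (i + a + 1) - real (a + d + 2)) gchoose i)
       / ((N + real (i + a + 1)) gchoose (i + a + 2))"

lemma binom_ratio_eq_beta_weight:
  assumes "N > real (a + d)"
  shows "N * binom_ratio a d N i = real (i + a + 1) * real (i + a + 2) * beta_weight a d N i"
proof -
  define B where "B = N + real (i + a + 1)"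
  define A where "A = B - real (a + d + 2)"
  have fact_eq: "fact (i + a + 2) = ffact (real (i + a + 2)) (a + 2) * fact i"
    using ffact_add[of "real (i + a + 2)" "a + 2" i] ffact_of_nat_self[of i, where ?'a=real]
      ffact_of_nat_self[of "i + a + 2", where ?'a=real]
    by (simp add: add.commute add.left_commute)
  have ffact_eq: "ffact (real (i + a + 2)) (a + 2)
      = real (i + a + 1) * real (i + a + 2) * ffact (real (i + a)) a"
    by (simp add: numeral_2_eq_2 ffact_Suc_left algebra_simps)
  have "ffact B (a + d + 2) * ffact A i = ffact B (i + a + 2) * ffact (N - 1) d"
    using ffact_add[of B "a + d + 2" i] ffact_add[of B "i + a + 2" d]
    by (simp add: A_def B_def algebra_simps)
  moreover have pos: "ffact B (a + d + 2) > 0" "ffact B (i + a + 2) > 0"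
    using assms by (auto simp: B_def intro!: ffact_pos)
  ultimately have ratio: "ffact A i / ffact B (i + a + 2) = ffact (N - 1) d / ffact B (a + d + 2)"
    by (simp add: field_simps)
  have "N * ((A gchoose i) / (B gchoose (i + a + 2)))
      = N * ffact (real (i + a + 2)) (a + 2) * (ffact A i / ffact B (i + a + 2))"
    unfolding gbinomial_ffact fact_eq using pos by (simp add: field_simps)
  also have "\<dots> = ffact (real (i + a + 2)) (a + 2) * (N * ffact (N - 1) d) / ffact B (a + d + 2)"
    unfolding ratio by (simp add: ac_simps)
  also have "N * ffact (N - 1) d = ffact N (d + 1)"
    using ffact_Suc_left[of N d] by simp
  also have "ffact (real (i + a + 2)) (a + 2) * ffact N (d + 1) / ffact B (a + d + 2)
      = real (i + a + 1) * real (i + a + 2) * beta_weight a d N i"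
    unfolding ffact_eq beta_weight_def B_def by (simp add: ac_simps)
  finally show ?thesis by (simp only: binom_ratio_def A_def B_def)
qed

lemma has_integral_power_mult_power_one_minus:
  "((\<lambda>u::real. u ^ a * (1 - u) ^ d) has_integral (fact a * fact d / fact (a + d + 1))) {0..1}"
proof -
  have "((\<lambda>u. u powr (real a + 1 - 1) * (1 - u) powr (real d + 1 - 1)) has_integral
      Beta (real a + 1) (real d + 1)) {0<..<1}"
    using has_integral_Beta_real[of "real a + 1" "real d + 1"] by (simp add: has_integral_Icc_iff_Ioo)
  then have "((\<lambda>u. u ^ a * (1 - u) ^ d) has_integral Beta (real a + 1) (real d + 1)) {0<..<1}"
    by (rule has_integral_cong[THEN iffD1, rotated]) (simp add: powr_realpow)
  moreover have "Beta (real a + 1) (real d + 1) = fact a * fact d / fact (a + d + 1)"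
    using Gamma_fact[of a, where ?'a=real] Gamma_fact[of d, where ?'a=real]
      Gamma_fact[of "a + d + 1", where ?'a=real]
    by (simp add: Beta_def add_ac)
  ultimately show ?thesis by (simp add: has_integral_Icc_iff_Ioo)
qed

lemma Rj_closed_form: "Rj b p0 (a + d + 2) (a + 2) = b * p0 * (fact a * fact d / fact (a + d + 1))"
proof -
  have "((\<lambda>u. b * p0 * (u ^ a * (1 - u) ^ d)) has_integral
      b * p0 * (fact a * fact d / fact (a + d + 1))) {0<..<1}"
    using has_integral_power_mult_power_one_minus[of a d]
    by (intro has_integral_mult_right) (simp add: has_integral_Icc_iff_Ioo)
  then have "((\<lambda>u. u ^ (a + 2) * (1 - u) ^ (a + d + 2 - (a + 2)) * (b * p0 / u\<^sup>2)) has_integral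
      b * p0 * (fact a * fact d / fact (a + d + 1))) {0<..<1}"
    by (rule has_integral_cong[THEN iffD1, rotated]) (simp add: power_add power2_eq_square field_simps)
  then show ?thesis
    unfolding Rj_def by (intro integral_unique) (simp add: has_integral_Icc_iff_Ioo)
qed

lemma tendsto_mult_square_imp_mult_pronic:
  fixes p :: "nat \<Rightarrow> real"
  assumes "(\<lambda>l. p l * (real l)\<^sup>2) \<longlonglongrightarrow> p0"
  shows "(\<lambda>l. p l * (real l * (real l + 1))) \<longlonglongrightarrow> p0"
proof -
  have "(\<lambda>l. p l * (real l)\<^sup>2 * (1 + 1 / real l)) \<longlonglongrightarrow> p0 * (1 + 0)"
    by (intro tendsto_intros assms lim_1_over_n)
  moreover have "\<forall>\<^sub>F l in sequentially.
      p l * (real l)\<^sup>2 * (1 + 1 / real l) = p l * (real l * (real l + 1))"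
    using eventually_gt_at_top[of 0] by eventually_elim (simp add: field_simps power2_eq_square)
  ultimately show ?thesis by (simp add: tendsto_cong)
qed

lemma scaled_binom_series_eq_weighted_series:
  fixes p :: "nat \<Rightarrow> real" and a d :: nat
  defines "Q \<equiv> \<lambda>i. p (i + a + 1) * (real (i + a + 1) * real (i + a + 2))"
  assumes "N > real (a + d)" and "Bseq Q"
  shows "N * (\<Sum>i. p (i + a + 1) * binom_ratio a d N i) = (\<Sum>i. Q i * beta_weight a d N i)"
proof -
  have Qf: "Q i * beta_weight a d N i = N * (p (i + a + 1) * binom_ratio a d N i)" for i
    using binom_ratio_eq_beta_weight[OF assms(2), of i] by (simp add: Q_def ac_simps)
  obtain B where B: "\<And>i. norm (Q i) \<le> B"
    using \<open>Bseq Q\<close> unfolding Bseq_def by auto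
  have "summable (\<lambda>i. Q i * beta_weight a d N i)"
  proof (rule summable_comparison_test')
    show "summable (\<lambda>i. B * beta_weight a d N i)"
      using beta_weight_sums[OF assms(2)] by (intro summable_mult sums_summable)
    show "norm (Q i * beta_weight a d N i) \<le> B * beta_weight a d N i" for i
      using B[of i] beta_weight_nonneg[OF assms(2), of i] by (simp add: abs_mult mult_right_mono)
  qed
  moreover have "N \<noteq> 0" using assms(2) of_nat_0_le_iff[of "a + d"] by linarith
  ultimately have "summable (\<lambda>i. p (i + a + 1) * binom_ratio a d N i)"
    unfolding Qf by (rule summable_mult_D)
  then show ?thesis unfolding Qf by (rule suminf_mult[symmetric])
qed

lemma tendsto_scaled_binom_series:
  fixes p :: "nat \<Rightarrow> real"
  assumes "(\<lambda>l. p l * (real l)\<^sup>2) \<longlonglongrightarrow> p0"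
  shows "((\<lambda>N. N * (\<Sum>i. p (i + a + 1) * binom_ratio a d N i))
          \<longlongrightarrow> p0 * (fact a * fact d / fact (a + d + 1))) at_top"
proof -
  define Q where "Q = (\<lambda>i. p (i + a + 1) * (real (i + a + 1) * real (i + a + 2)))"
  have "Q = (\<lambda>i. p (i + (a + 1)) * (real (i + (a + 1)) * (real (i + (a + 1)) + 1)))"
    by (simp add: Q_def fun_eq_iff add_ac)
  then have Q: "Q \<longlonglongrightarrow> p0"
    using LIMSEQ_ignore_initial_segment[OF tendsto_mult_square_imp_mult_pronic[OF assms], of "a + 1"]
    by simp
  have "\<forall>\<^sub>F N in at_top. beta_weight a d N sums (fact a * fact d / fact (a + d + 1))
      \<and> (\<forall>i. beta_weight a d N i \<ge> 0)"
    using eventually_gt_at_top[of "real (a + d)"]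
    by eventually_elim (blast intro: beta_weight_sums beta_weight_nonneg)
  then have "((\<lambda>N. \<Sum>i. Q i * beta_weight a d N i)
      \<longlongrightarrow> p0 * (fact a * fact d / fact (a + d + 1))) at_top"
    by (rule tendsto_suminf_mult_weights[OF _ beta_weight_tendsto_0 Q])
  moreover have "\<forall>\<^sub>F N in at_top.
      (\<Sum>i. Q i * beta_weight a d N i) = N * (\<Sum>i. p (i + a + 1) * binom_ratio a d N i)"
    using eventually_gt_at_top[of "real (a + d)"]
    by eventually_elim (use scaled_binom_series_eq_weighted_series[where p=p and a=a and d=d]
      convergent_imp_Bseq[OF convergentI[OF Q]] in \<open>simp add: Q_def\<close>)
  ultimately show ?thesis by (rule Lim_transform_eventually)
qed

lemma uniform_limit_scaled_at_top:
  fixes G :: "real \<Rightarrow> 'a::metric_space"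
  assumes G: "(G \<longlongrightarrow> L) at_top" and h: "filterlim h at_top F" and "c > 0"
  shows "uniform_limit {c..} (\<lambda>K n. G (h K * n)) (\<lambda>_. L) F"
  unfolding uniform_limit_iff
proof (intro allI impI)
  fix e :: real assume "e > 0"
  then obtain N0 where N0: "\<And>N. N \<ge> N0 \<Longrightarrow> dist (G N) L < e"
    using tendstoD[OF G] unfolding eventually_at_top_linorder by blast
  have "\<forall>\<^sub>F K in F. h K \<ge> \<bar>N0\<bar> / c" using h by (simp add: filterlim_at_top)
  then show "\<forall>\<^sub>F K in F. \<forall>n\<in>{c..}. dist (G (h K * n)) L < e"
  proof eventually_elim
    case (elim K)
    then have "h K * c \<ge> \<bar>N0\<bar>" "h K \<ge> 0"
      using \<open>c > 0\<close> order_trans[OF divide_nonneg_pos[OF abs_ge_zero \<open>c > 0\<close>]]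
      by (auto simp: pos_divide_le_eq)
    then have "h K * n \<ge> N0" if "n \<ge> c" for n
      using mult_left_mono[OF that \<open>h K \<ge> 0\<close>] by linarith
    then show ?case by (auto intro: N0)
  qed
qed

theorem lemma8:
  fixes p :: "nat \<Rightarrow> real" and b p0 c0 :: real and k j :: nat
  assumes "b > 0" and "p0 > 0"
    and "\<And>l. l \<ge> 1 \<Longrightarrow> p l \<ge> 0"
    and "(\<lambda>l. p (Suc l)) sums 1"
    and "(\<lambda>l. p l * (real l)\<^sup>2) \<longlonglongrightarrow> p0"
    and "k \<ge> j" and "j \<ge> 2" and "c0 > 0"
  shows "uniform_limit {c0/2..} (\<lambda>K n. Rjn p b k j K n) (\<lambda>n. Rj b p0 k j) at_top"
proof -
  define a d where "a = j - 2" and "d = k - j"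
  then have j: "j = a + 2" and k: "k = a + d + 2" using assms(6,7) by auto
  define G where "G N = b * (N * (\<Sum>i. p (i + a + 1) * binom_ratio a d N i))" for N
  have "(G \<longlongrightarrow> b * (p0 * (fact a * fact d / fact (a + d + 1)))) at_top"
    unfolding G_def by (intro tendsto_mult_left tendsto_scaled_binom_series assms(5))
  then have "(G \<longlongrightarrow> Rj b p0 k j) at_top"
    unfolding j k Rj_closed_form by (simp add: mult.assoc)
  moreover have "filterlim (\<lambda>K::real. K * ln K) at_top at_top" by real_asymp
  moreover have "Rjn p b k j K n = G (K * ln K * n)" for K n
  proof -
    have "(\<lambda>i. let l = i + (j - 1) in p l * (((N + real l - real k) gchoose (l + 1 - j))
              / ((N + real l) gchoose (l + 1))))
        = (\<lambda>i. p (i + a + 1) * binom_ratio a d N i)" for N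
      by (simp add: binom_ratio_def j k Let_def add_ac)
    then show ?thesis by (simp only: Rjn_def G_def mult_ac)
  qed
  ultimately show ?thesis
    using uniform_limit_scaled_at_top[of G _ "\<lambda>K. K * ln K" at_top "c0 / 2"] assms(8) by simp
qed

end
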